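(* Let $\mathbf{P}_A,\mathbf{P}_B,\mathbf{Q}_A,\mathbf{Q}_B\in\mathbb{R}^{n\times n}$ be symmetric positive definite and, for $\omega\in[0,1]$, $\bar\omega=1-\omega$, let $\mathbf{H}_{\mathrm{SCI}}(\omega)=\omega(\mathbf{P}_A+\omega\mathbf{Q}_A)^{-1}+\bar\omega(\mathbf{P}_B+\bar\omega\mathbf{Q}_B)^{-1}$. Then for all $\omega\in[0,1]$, the second derivative satisfies $\mathbf{H}_{\mathrm{SCI}}''(\omega)\prec0$.
   Context: $\prec 0$ means negative definite; the derivative is taken with respect to $\omega$. *)

theory Defs
  imports "HOL-Analysis.Analysis"
begin

definition sym_pos_def :: "real^'n^'n \<Rightarrow> bool" where
  "sym_pos_def M \<longleftrightarrow> transpose M = M \<and> (\<forall>x. x \<noteq> 0 \<longrightarrow> 0 < x \<bullet> (M *v x))"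

definition sym_neg_def :: "real^'n^'n \<Rightarrow> bool" where
  "sym_neg_def M \<longleftrightarrow> transpose M = M \<and> (\<forall>x. x \<noteq> 0 \<longrightarrow> x \<bullet> (M *v x) < 0)"

definition H_SCI :: "real^'n^'n \<Rightarrow> real^'n^'n \<Rightarrow> real^'n^'n \<Rightarrow> real^'n^'n \<Rightarrow> real \<Rightarrow> real^'n^'n" where
  "H_SCI PA PB QA QB w =
     w *\<^sub>R matrix_inv (PA + w *\<^sub>R QA) + (1 - w) *\<^sub>R matrix_inv (PB + (1 - w) *\<^sub>R QB)"

end

theory Submission
  imports Defs
begin

text \<open>
  Write \<open>f(s) = s N(s)\<close> with \<open>N(s) = (P + s Q)\<^sup>-\<^sup>1\<close>, so that
  \<open>H\<^sub>S\<^sub>C\<^sub>I(w) = f\<^sub>A(w) + f\<^sub>B(1 - w)\<close>. From \<open>N' = -N Q N\<close> one gets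
  \<open>f'' = -2 N Q N + 2 s N Q N Q N = -2 N (Q N P) N\<close>, using \<open>N P = I - s N Q\<close>.
  The middle factor \<open>Q N P = (Q\<^sup>-\<^sup>1 + s P\<^sup>-\<^sup>1)\<^sup>-\<^sup>1\<close> is the inverse of a
  positive definite matrix for \<open>s \<ge> 0\<close>, hence positive definite;
  since \<open>N\<close> is symmetric and invertible, \<open>f''(s)\<close> is negative definite by congruence.
  The reflection \<open>w \<mapsto> 1 - w\<close> does not change the sign of a second derivative.
\<close>

lemma bounded_bilinear_matrix_matrix_mult:
  "bounded_bilinear ((**) :: real^'n^'m \<Rightarrow> real^'p^'n \<Rightarrow> real^'p^'m)"
proof -
  have "bilinear ((**) :: real^'n^'m \<Rightarrow> real^'p^'n \<Rightarrow> real^'p^'m)"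
    unfolding bilinear_def linear_iff
    by (auto simp: matrix_matrix_mult_def vec_eq_iff sum.distrib algebra_simps sum_distrib_left)
  then show ?thesis
    by (rule bilinear_conv_bounded_bilinear[THEN iffD1])
qed

lemmas matrix_mult_add_left = bounded_bilinear.add_left[OF bounded_bilinear_matrix_matrix_mult]
lemmas matrix_mult_diff_left = bounded_bilinear.diff_left[OF bounded_bilinear_matrix_matrix_mult]
lemmas matrix_mult_diff_right = bounded_bilinear.diff_right[OF bounded_bilinear_matrix_matrix_mult]
lemmas matrix_mult_minus_left = bounded_bilinear.minus_left[OF bounded_bilinear_matrix_matrix_mult]
lemmas matrix_mult_minus_right = bounded_bilinear.minus_right[OF bounded_bilinear_matrix_matrix_mult]
lemmas matrix_mult_scaleR_left = bounded_bilinear.scaleR_left[OF bounded_bilinear_matrix_matrix_mult]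
lemmas matrix_mult_scaleR_right = bounded_bilinear.scaleR_right[OF bounded_bilinear_matrix_matrix_mult]

lemma transpose_add: "transpose (A + B) = transpose A + transpose (B :: 'a::semiring_1^'n^'m)"
  by (simp add: transpose_def vec_eq_iff)

lemma inner_transpose_matrix_vector:
  fixes A :: "real^'n^'m"
  shows "x \<bullet> (transpose A *v y) = (A *v x) \<bullet> y"
  by (metis dot_lmul_matrix inner_commute transpose_matrix_vector)

lemma
  fixes A :: "'a::semiring_1^'n^'n"
  assumes "invertible A"
  shows matrix_inv_right: "A ** matrix_inv A = mat 1"
    and matrix_inv_left: "matrix_inv A ** A = mat 1"
  using someI_ex[OF assms[unfolded invertible_def]] unfolding matrix_inv_def by auto

lemma matrix_inv_unique:
  fixes A B :: "real^'n^'n"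
  assumes "A ** B = mat 1"
  shows "matrix_inv A = B"
proof -
  have "invertible A"
    using assms invertible_right_inverse by blast
  then have "matrix_inv A = matrix_inv A ** (A ** B)"
    by (simp add: assms)
  also have "\<dots> = B"
    by (simp add: matrix_mul_assoc matrix_inv_left \<open>invertible A\<close>)
  finally show ?thesis .
qed

lemma transpose_matrix_inv:
  fixes A :: "real^'n^'n"
  assumes "invertible A"
  shows "transpose (matrix_inv A) = matrix_inv (transpose A)"
proof -
  have "transpose A ** transpose (matrix_inv A) = mat 1"
    by (simp add: assms matrix_inv_left flip: matrix_transpose_mul)
  then show ?thesis
    by (simp add: matrix_inv_unique)
qed

lemma matrix_inv_diff:
  fixes A B :: "real^'n^'n"
  assumes "invertible A" "invertible B"
  shows "matrix_inv B - matrix_inv A = matrix_inv B ** (A - B) ** matrix_inv A"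
proof -
  have "matrix_inv B ** (A - B) ** matrix_inv A
      = matrix_inv B ** (A ** matrix_inv A) - (matrix_inv B ** B) ** matrix_inv A"
    by (simp add: matrix_mult_diff_left matrix_mult_diff_right matrix_mul_assoc)
  then show ?thesis
    by (simp add: matrix_inv_left matrix_inv_right assms)
qed

lemma matrix_inv_cramer:
  fixes A :: "real^'n^'n"
  assumes "det A \<noteq> 0"
  shows "matrix_inv A = (\<chi> k j. det (\<chi> i l. if l = k then axis j 1 $ i else A $ i $ l) / det A)"
proof -
  have inv: "invertible A"
    using assms invertible_det_nz by blast
  have "matrix_inv A $ k $ j = det (\<chi> i l. if l = k then axis j 1 $ i else A $ i $ l) / det A" for k j
  proof -
    have "A *v (matrix_inv A *v axis j 1) = axis j 1"
      by (simp add: matrix_vector_mul_assoc matrix_inv_right[OF inv])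
    then have "matrix_inv A *v axis j 1
        = (\<chi> k. det (\<chi> i l. if l = k then axis j 1 $ i else A $ i $ l) / det A)"
      using cramer[OF assms] by blast
    moreover have "(matrix_inv A *v axis j 1) $ k = matrix_inv A $ k $ j"
      by (simp add: matrix_vector_mult_def axis_def if_distrib cong: if_cong)
    ultimately show ?thesis
      by simp
  qed
  then show ?thesis
    by (simp add: vec_eq_iff)
qed

lemma tendsto_det [tendsto_intros]:
  fixes g :: "'a \<Rightarrow> real^'n^'n"
  assumes "(g \<longlongrightarrow> A) F"
  shows "((\<lambda>t. det (g t)) \<longlongrightarrow> det A) F"
  unfolding det_def by (intro tendsto_intros assms)

lemma eventually_invertible:
  fixes g :: "'a \<Rightarrow> real^'n^'n"
  assumes "(g \<longlongrightarrow> A) F" "invertible A"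
  shows "\<forall>\<^sub>F t in F. invertible (g t)"
  using tendsto_imp_eventually_ne[OF tendsto_det[OF assms(1)]] assms(2)
  by (simp add: invertible_det_nz)

lemma tendsto_matrix_inv [tendsto_intros]:
  fixes g :: "'a \<Rightarrow> real^'n^'n"
  assumes "(g \<longlongrightarrow> A) F" "invertible A"
  shows "((\<lambda>t. matrix_inv (g t)) \<longlongrightarrow> matrix_inv A) F"
proof -
  let ?cramer = "\<lambda>A. \<chi> k j. det (\<chi> i l. if l = k then axis j 1 $ i else A $ i $ l) / det A"
  have detA: "det A \<noteq> 0"
    using assms(2) invertible_det_nz by blast
  have "((\<lambda>t. ?cramer (g t)) \<longlongrightarrow> ?cramer A) F"
    by (intro tendsto_intros assms(1) detA) (auto intro!: tendsto_intros assms(1))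
  moreover have "\<forall>\<^sub>F t in F. ?cramer (g t) = matrix_inv (g t)"
    using eventually_invertible[OF assms]
    by eventually_elim (simp add: matrix_inv_cramer invertible_det_nz)
  ultimately show ?thesis
    using matrix_inv_cramer[OF detA] by (simp add: tendsto_cong)
qed

lemma has_vector_derivative_iff_difference_quotient:
  fixes f :: "real \<Rightarrow> 'a::real_normed_vector"
  shows "(f has_vector_derivative f') (at x)
    \<longleftrightarrow> ((\<lambda>y. (f y - f x) /\<^sub>R (y - x)) \<longlongrightarrow> f') (at x)"
proof -
  have "norm (f y - f x - (y - x) *\<^sub>R f') / norm (y - x) = norm ((f y - f x) /\<^sub>R (y - x) - f')"
    if "y \<noteq> x" for y
  proof -
    have "(f y - f x) /\<^sub>R (y - x) - f' = (1 / (y - x)) *\<^sub>R (f y - f x - (y - x) *\<^sub>R f')"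
      using that by (simp add: scaleR_diff_right divide_inverse_commute)
    then show ?thesis
      by (simp add: divide_inverse_commute)
  qed
  then have "\<forall>\<^sub>F y in at x. norm (f y - f x - (y - x) *\<^sub>R f') / norm (y - x)
      = norm ((f y - f x) /\<^sub>R (y - x) - f')"
    by (auto simp: eventually_at_filter)
  then show ?thesis
    unfolding has_vector_derivative_def has_derivative_iff_norm
    by (simp add: bounded_linear_scaleR_left tendsto_cong tendsto_norm_zero_iff LIM_zero_iff)
qed

lemma has_vector_derivative_reflect:
  fixes f :: "real \<Rightarrow> 'a::real_normed_vector"
  assumes "(f has_vector_derivative f') (at (1 - t))"
  shows "((\<lambda>t. f (1 - t)) has_vector_derivative - f') (at t)"
proof -
  have "((\<lambda>t. 1 - t) has_vector_derivative -1) (at t)"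
    by (auto intro!: derivative_eq_intros)
  from vector_diff_chain_at[OF this assms] show ?thesis
    by (simp add: o_def)
qed

lemma has_vector_derivative_matrix_inv:
  fixes M :: "real \<Rightarrow> real^'n^'n"
  assumes "(M has_vector_derivative M') (at t)" "invertible (M t)"
  shows "((\<lambda>s. matrix_inv (M s)) has_vector_derivative
    - (matrix_inv (M t) ** M' ** matrix_inv (M t))) (at t)"
proof -
  let ?N = "\<lambda>s. matrix_inv (M s)"
  have M_lim: "(M \<longlongrightarrow> M t) (at t)"
    using has_vector_derivative_continuous[OF assms(1)] by (simp add: isCont_def)
  have "((\<lambda>s. (M s - M t) /\<^sub>R (s - t)) \<longlongrightarrow> M') (at t)"
    using assms(1) has_vector_derivative_iff_difference_quotient by blast
  then have "((\<lambda>s. - (?N s ** ((M s - M t) /\<^sub>R (s - t)) ** ?N t))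
      \<longlongrightarrow> - (?N t ** M' ** ?N t)) (at t)"
    by (intro tendsto_intros bounded_bilinear.tendsto[OF bounded_bilinear_matrix_matrix_mult]
        tendsto_matrix_inv M_lim assms(2))
  moreover have "\<forall>\<^sub>F s in at t.
      - (?N s ** ((M s - M t) /\<^sub>R (s - t)) ** ?N t) = (?N s - ?N t) /\<^sub>R (s - t)"
    using eventually_invertible[OF M_lim assms(2)]
  proof eventually_elim
    case (elim s)
    have "?N s - ?N t = - (?N s ** (M s - M t) ** ?N t)"
      using matrix_inv_diff[OF assms(2) elim] by (simp add: matrix_mult_diff_left matrix_mult_diff_right)
    then show ?case
      by (simp add: matrix_mult_scaleR_left matrix_mult_scaleR_right)
  qed
  ultimately show ?thesis
    by (simp add: has_vector_derivative_iff_difference_quotient tendsto_cong)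
qed

lemma second_vector_derivative:
  fixes f :: "real \<Rightarrow> 'a::real_normed_vector"
  assumes "\<forall>\<^sub>F t in nhds w. (f has_vector_derivative f' t) (at t)"
    and "(f' has_vector_derivative f'') (at w)"
  shows "(\<forall>\<^sub>F t in nhds w. f differentiable (at t))
    \<and> (\<lambda>t. vector_derivative f (at t)) differentiable (at w)
    \<and> vector_derivative (\<lambda>t. vector_derivative f (at t)) (at w) = f''"
proof -
  have "\<forall>\<^sub>F t in nhds w. vector_derivative f (at t) = f' t"
    using assms(1) by eventually_elim (rule vector_derivative_at)
  then have "((\<lambda>t. vector_derivative f (at t)) has_vector_derivative f'') (at w)"
    using assms(2)
    by (subst has_vector_derivative_cong_ev[where g = f'])
      (auto dest: eventually_nhds_x_imp_x elim: eventually_mono)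
  with assms(1) show ?thesis
    by (auto simp: vector_derivative_at has_vector_derivative_def differentiable_def
        elim!: eventually_mono)
qed

lemma sym_pos_def_invertible:
  fixes A :: "real^'n^'n"
  assumes "sym_pos_def A"
  shows "invertible A"
proof -
  have "x = 0" if "A *v x = 0" for x
    using assms that by (auto simp: sym_pos_def_def)
  then show ?thesis
    using matrix_left_invertible_ker invertible_left_inverse by blast
qed

lemma sym_pos_def_congruence:
  fixes K C :: "real^'n^'n"
  assumes "sym_pos_def K" "invertible C"
  shows "sym_pos_def (transpose C ** K ** C)"
proof -
  have "C *v x \<noteq> 0" if "x \<noteq> 0" for x
    using assms(2) that matrix_left_invertible_ker invertible_left_inverse by blast
  moreover have "x \<bullet> ((transpose C ** K ** C) *v x) = (C *v x) \<bullet> (K *v (C *v x))" for x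
    by (simp only: inner_transpose_matrix_vector flip: matrix_vector_mul_assoc)
  ultimately have "0 < x \<bullet> ((transpose C ** K ** C) *v x)" if "x \<noteq> 0" for x
    using assms(1) that by (simp add: sym_pos_def_def)
  moreover have "transpose (transpose C ** K ** C) = transpose C ** K ** C"
    using assms(1) by (simp add: sym_pos_def_def matrix_transpose_mul matrix_mul_assoc)
  ultimately show ?thesis
    by (simp add: sym_pos_def_def)
qed

lemma sym_pos_def_matrix_inv:
  fixes A :: "real^'n^'n"
  assumes "sym_pos_def A"
  shows "sym_pos_def (matrix_inv A)"
proof -
  have inv: "invertible A" and sym: "transpose A = A"
    using assms sym_pos_def_invertible by (auto simp: sym_pos_def_def)
  have "invertible (matrix_inv A)"
    using inv invertible_left_inverse matrix_inv_right by blast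
  with assms have "sym_pos_def (transpose (matrix_inv A) ** A ** matrix_inv A)"
    by (rule sym_pos_def_congruence)
  then show ?thesis
    by (simp add: transpose_matrix_inv inv sym matrix_inv_left)
qed

lemma sym_pos_def_add_scaleR:
  fixes P Q :: "real^'n^'n"
  assumes "sym_pos_def P" "sym_pos_def Q" "0 \<le> s"
  shows "sym_pos_def (P + s *\<^sub>R Q)"
proof -
  have "0 < x \<bullet> ((P + s *\<^sub>R Q) *v x)" if "x \<noteq> 0" for x
  proof -
    have "0 < x \<bullet> (P *v x)" "0 < x \<bullet> (Q *v x)"
      using assms that by (auto simp: sym_pos_def_def)
    then show ?thesis
      using assms(3)
      by (simp add: matrix_vector_mult_add_rdistrib inner_add_right add_pos_nonneg
          flip: scaleR_matrix_vector_assoc)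
  qed
  then show ?thesis
    using assms by (simp add: sym_pos_def_def transpose_add transpose_scalar)
qed

lemma sym_neg_def_scaleR:
  fixes A :: "real^'n^'n"
  assumes "sym_pos_def A" "c < 0"
  shows "sym_neg_def (c *\<^sub>R A)"
  using assms by (simp add: sym_pos_def_def sym_neg_def_def transpose_scalar mult_neg_pos
      flip: scaleR_matrix_vector_assoc)

lemma sym_neg_def_add:
  fixes A B :: "real^'n^'n"
  assumes "sym_neg_def A" "sym_neg_def B"
  shows "sym_neg_def (A + B)"
  using assms by (simp add: sym_neg_def_def transpose_add matrix_vector_mult_add_rdistrib
      inner_add_right add_neg_neg)

definition pencil_inv :: "real^'n^'n \<Rightarrow> real^'n^'n \<Rightarrow> real \<Rightarrow> real^'n^'n" where
  "pencil_inv P Q s = matrix_inv (P + s *\<^sub>R Q)"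

definition scaled_pencil_inv :: "real^'n^'n \<Rightarrow> real^'n^'n \<Rightarrow> real \<Rightarrow> real^'n^'n" where
  "scaled_pencil_inv P Q s = s *\<^sub>R pencil_inv P Q s"

definition scaled_pencil_inv' :: "real^'n^'n \<Rightarrow> real^'n^'n \<Rightarrow> real \<Rightarrow> real^'n^'n" where
  "scaled_pencil_inv' P Q s =
     pencil_inv P Q s - s *\<^sub>R (pencil_inv P Q s ** Q ** pencil_inv P Q s)"

definition scaled_pencil_inv'' :: "real^'n^'n \<Rightarrow> real^'n^'n \<Rightarrow> real \<Rightarrow> real^'n^'n" where
  "scaled_pencil_inv'' P Q s =
     -2 *\<^sub>R (pencil_inv P Q s ** Q ** pencil_inv P Q s)
     + (2 * s) *\<^sub>R (pencil_inv P Q s ** Q ** pencil_inv P Q s ** Q ** pencil_inv P Q s)"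

lemma H_SCI_eq_scaled_pencil_inv:
  "H_SCI PA PB QA QB t = scaled_pencil_inv PA QA t + scaled_pencil_inv PB QB (1 - t)"
  by (simp add: H_SCI_def scaled_pencil_inv_def pencil_inv_def)

lemma has_vector_derivative_pencil_inv:
  fixes P Q :: "real^'n^'n"
  assumes "invertible (P + s *\<^sub>R Q)"
  shows "(pencil_inv P Q has_vector_derivative
    - (pencil_inv P Q s ** Q ** pencil_inv P Q s)) (at s)"
proof -
  have "((\<lambda>t. P + t *\<^sub>R Q) has_vector_derivative Q) (at s)"
    by (auto intro!: derivative_eq_intros)
  from has_vector_derivative_matrix_inv[OF this assms] show ?thesis
    by (simp add: pencil_inv_def[abs_def])
qed

lemma has_vector_derivative_scaled_pencil_inv:
  fixes P Q :: "real^'n^'n"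
  assumes "invertible (P + s *\<^sub>R Q)"
  shows "(scaled_pencil_inv P Q has_vector_derivative scaled_pencil_inv' P Q s) (at s)"
  unfolding scaled_pencil_inv_def[abs_def] scaled_pencil_inv'_def
  by (rule has_vector_derivative_eq_rhs,
      rule has_vector_derivative_scaleR[OF _ has_vector_derivative_pencil_inv[OF assms]])
    (auto intro!: derivative_eq_intros)

lemma has_vector_derivative_scaled_pencil_inv':
  fixes P Q :: "real^'n^'n"
  assumes "invertible (P + s *\<^sub>R Q)"
  shows "(scaled_pencil_inv' P Q has_vector_derivative scaled_pencil_inv'' P Q s) (at s)"
proof -
  let ?N = "pencil_inv P Q"
  note mult = bounded_bilinear.has_vector_derivative[OF bounded_bilinear_matrix_matrix_mult]
  have N: "(?N has_vector_derivative - (?N s ** Q ** ?N s)) (at s)"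
    using assms by (rule has_vector_derivative_pencil_inv)
  have "((\<lambda>t. ?N t ** Q ** ?N t) has_vector_derivative
      (?N s ** Q) ** - (?N s ** Q ** ?N s) + (?N s ** 0 + - (?N s ** Q ** ?N s) ** Q) ** ?N s) (at s)"
    by (intro mult N has_vector_derivative_const)
  then have NQN: "((\<lambda>t. ?N t ** Q ** ?N t) has_vector_derivative
      -2 *\<^sub>R (?N s ** Q ** ?N s ** Q ** ?N s)) (at s)"
    by (rule has_vector_derivative_eq_rhs)
      (simp add: matrix_mul_assoc scaleR_2 matrix_mult_minus_left matrix_mult_minus_right)
  have "((\<lambda>t. ?N t - t *\<^sub>R (?N t ** Q ** ?N t)) has_vector_derivative
      - (?N s ** Q ** ?N s)
      - (s *\<^sub>R (-2 *\<^sub>R (?N s ** Q ** ?N s ** Q ** ?N s)) + 1 *\<^sub>R (?N s ** Q ** ?N s))) (at s)"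
    by (intro has_vector_derivative_diff has_vector_derivative_scaleR N NQN DERIV_ident)
  then show ?thesis
    unfolding scaled_pencil_inv'_def[abs_def] scaled_pencil_inv''_def
    by (rule has_vector_derivative_eq_rhs) (simp add: vec_eq_iff algebra_simps)
qed

lemma matrix_inv_parallel_sum:
  fixes P Q :: "real^'n^'n"
  assumes "invertible P" "invertible Q" "invertible (P + s *\<^sub>R Q)"
  shows "Q ** pencil_inv P Q s ** P = matrix_inv (matrix_inv Q + s *\<^sub>R matrix_inv P)"
proof (rule matrix_inv_unique[symmetric])
  let ?M = "P + s *\<^sub>R Q"
  have "matrix_inv Q + s *\<^sub>R matrix_inv P
      = (matrix_inv P ** P) ** matrix_inv Q + s *\<^sub>R (matrix_inv P ** (Q ** matrix_inv Q))"
    by (simp add: assms matrix_inv_left matrix_inv_right)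
  also have "\<dots> = matrix_inv P ** ?M ** matrix_inv Q"
    by (simp add: matrix_add_ldistrib matrix_mult_add_left matrix_mult_scaleR_left
        matrix_mult_scaleR_right matrix_mul_assoc)
  finally have "(matrix_inv Q + s *\<^sub>R matrix_inv P) ** (Q ** pencil_inv P Q s ** P)
      = matrix_inv P ** (?M ** (matrix_inv Q ** Q) ** matrix_inv ?M) ** P"
    by (simp add: pencil_inv_def matrix_mul_assoc)
  also have "\<dots> = mat 1"
    by (simp add: assms matrix_inv_left matrix_inv_right)
  finally show "(matrix_inv Q + s *\<^sub>R matrix_inv P) ** (Q ** pencil_inv P Q s ** P) = mat 1" .
qed

lemma sym_neg_def_scaled_pencil_inv'':
  fixes P Q :: "real^'n^'n"
  assumes P: "sym_pos_def P" and Q: "sym_pos_def Q" and "0 \<le> s"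
  shows "sym_neg_def (scaled_pencil_inv'' P Q s)"
proof -
  define N where "N = pencil_inv P Q s"
  have M: "sym_pos_def (P + s *\<^sub>R Q)"
    using P Q \<open>0 \<le> s\<close> by (rule sym_pos_def_add_scaleR)
  then have "sym_pos_def N"
    unfolding N_def pencil_inv_def by (rule sym_pos_def_matrix_inv)
  then have N_sym: "transpose N = N" and N_inv: "invertible N"
    using sym_pos_def_invertible by (auto simp: sym_pos_def_def)
  have "sym_pos_def (matrix_inv Q + s *\<^sub>R matrix_inv P)"
    using P Q \<open>0 \<le> s\<close> by (intro sym_pos_def_add_scaleR sym_pos_def_matrix_inv)
  then have K: "sym_pos_def (Q ** N ** P)"
    unfolding N_def using P Q M
    by (simp add: matrix_inv_parallel_sum sym_pos_def_invertible sym_pos_def_matrix_inv)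
  have "N ** P + s *\<^sub>R (N ** Q) = mat 1"
    using sym_pos_def_invertible[OF M]
    by (simp add: N_def pencil_inv_def matrix_inv_left flip: matrix_add_ldistrib matrix_mult_scaleR_right)
  then have "N ** P = mat 1 - s *\<^sub>R (N ** Q)"
    by (simp add: algebra_simps)
  then have "N ** (Q ** N ** P) ** N = N ** Q ** N - s *\<^sub>R (N ** Q ** N ** Q ** N)"
    by (simp add: matrix_mul_assoc matrix_mult_diff_left matrix_mult_diff_right
        matrix_mult_scaleR_left matrix_mult_scaleR_right flip: matrix_mul_assoc)
  then have "scaled_pencil_inv'' P Q s = -2 *\<^sub>R (transpose N ** (Q ** N ** P) ** N)"
    by (simp add: scaled_pencil_inv''_def N_def[symmetric] N_sym scaleR_diff_right)
  moreover have "sym_neg_def (-2 *\<^sub>R (transpose N ** (Q ** N ** P) ** N))"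
    by (intro sym_neg_def_scaleR sym_pos_def_congruence K N_inv) simp
  ultimately show ?thesis
    by simp
qed

theorem lemma3:
  fixes PA PB QA QB :: "real^'n^'n"
  assumes "sym_pos_def PA" "sym_pos_def PB" "sym_pos_def QA" "sym_pos_def QB"
    and "w \<in> {0..1}"
  shows "(\<forall>\<^sub>F t in nhds w. H_SCI PA PB QA QB differentiable (at t))
    \<and> (\<lambda>t. vector_derivative (H_SCI PA PB QA QB) (at t)) differentiable (at w)
    \<and> sym_neg_def (vector_derivative (\<lambda>t. vector_derivative (H_SCI PA PB QA QB) (at t)) (at w))"
proof -
  let ?H' = "\<lambda>t. scaled_pencil_inv' PA QA t - scaled_pencil_inv' PB QB (1 - t)"
  let ?H'' = "scaled_pencil_inv'' PA QA w + scaled_pencil_inv'' PB QB (1 - w)"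
  have inv_A: "invertible (PA + w *\<^sub>R QA)" and inv_B: "invertible (PB + (1 - w) *\<^sub>R QB)"
    using assms by (auto intro!: sym_pos_def_invertible sym_pos_def_add_scaleR)
  have "\<forall>\<^sub>F t in nhds w. invertible (PA + t *\<^sub>R QA)"
    using inv_A by (intro eventually_invertible) (auto intro!: tendsto_intros filterlim_ident)
  moreover have "\<forall>\<^sub>F t in nhds w. invertible (PB + (1 - t) *\<^sub>R QB)"
    using inv_B by (intro eventually_invertible) (auto intro!: tendsto_intros filterlim_ident)
  ultimately have "\<forall>\<^sub>F t in nhds w. (H_SCI PA PB QA QB has_vector_derivative ?H' t) (at t)"
    by eventually_elim (auto simp: H_SCI_eq_scaled_pencil_inv[abs_def]
        intro!: has_vector_derivative_scaled_pencil_inv has_vector_derivative_reflect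
          has_vector_derivative_eq_rhs[OF has_vector_derivative_add])
  moreover have "(?H' has_vector_derivative ?H'') (at w)"
    using inv_A inv_B
    by (auto intro!: has_vector_derivative_scaled_pencil_inv' has_vector_derivative_reflect
        has_vector_derivative_eq_rhs[OF has_vector_derivative_diff])
  moreover have "sym_neg_def ?H''"
    using assms by (intro sym_neg_def_add sym_neg_def_scaled_pencil_inv'') auto
  ultimately show ?thesis
    by (simp add: second_vector_derivative)
qed

end
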